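(* Let $V$ be a finite-dimensional real vector space with a positive definite inner product $\langle\cdot,\cdot\rangle$, and let $\mathbf L:[t_0-\varepsilon,t_0+\varepsilon]\to\mathcal L_{\mathrm{sym}}(V)$ be a smooth curve of symmetric operators such that $\mathbf L(t)$ is invertible for all $t\neq t_0$ and $\mathbf L(t_0)$ is not invertible. Let $\lambda_1(t),\dots,\lambda_n(t)$ be smooth functions giving the eigenvalues of $\mathbf L(t)$, and assume: (a) every non-constant $\lambda_i$ has a zero of finite order at $t=t_0$; (b) there exist smooth maps $\mathfrak v_i:[t_0-\varepsilon,t_0+\varepsilon]\to V$, $i=1,\dots,n$, such that for each $t$ the vectors $\mathfrak v_1(t),\dots,\mathfrak v_n(t)$ are pairwise orthogonal unit vectors with $\mathbf L(t)\mathfrak v_i(t)=\lambda_i(t)\mathfrak v_i(t)$. Then: (1) $W_k=\mathrm{span}\{\mathfrak v_i(t_0): \lambda_i^{(j)}(t_0)=0 \text{ for all } 0\le j<k\}$ for every $k\ge1$; (2) if $v\in W_k$ is an eigenvector of $\mathbf L(t_0)$ of the form $v=\mathfrak v_i(t_0)$ (or a multiple) with $\lambda_i(t_0)=\lambda_i'(t_0)=\dots=\lambda_i^{(k-1)}(t_0)=0$, then $B_k(v,w)=\frac1{k!}\lambda_i^{(k)}(t_0)\langle v,w\rangle$ for all $w\in W_k$; (3) the following hold, where all sums have only finitely many nonzero terms: $n^+(\mathbf L(t_0+\varepsilon))-n^+(\mathbf L(t_0))=\sum_{k\ge1}n^+_k(\mathbf L,t_0)$; $n^+(\mathbf L(t_0))-n^+(\mathbf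 L(t_0-\varepsilon))=-\sum_{k\ge1}\big(n^-_{2k-1}(\mathbf L,t_0)+n^+_{2k}(\mathbf L,t_0)\big)$; $n^+(\mathbf L(t_0+\varepsilon))-n^+(\mathbf L(t_0-\varepsilon))=\sum_{k\ge1}\sigma_{2k-1}(\mathbf L,t_0)$; $\bar n^+(\mathbf L(t_0+\varepsilon))-\bar n^+(\mathbf L(t_0))=\sum_{k\ge1}n^+_k(\mathbf L,t_0)-\dim\mathrm{Ker}\,\mathbf L(t_0)$; $\bar n^+(\mathbf L(t_0))-\bar n^+(\mathbf L(t_0-\varepsilon))=-\sum_{k\ge1}\big(n^-_{2k-1}(\mathbf L,t_0)+n^+_{2k}(\mathbf L,t_0)\big)+\dim\mathrm{Ker}\,\mathbf L(t_0)$.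
   Context: Operators and symmetric bilinear forms are identified via $T\mapsto\langle T\cdot,\cdot\rangle$. For a symmetric bilinear form $B$ on a finite-dimensional space: $n^-(B)$ (index) and $n^+(B)$ (coindex) are the numbers of negative and positive entries in a diagonal (Sylvester) form, $n_0(B)=\dim\mathrm{Ker}(B)$, $\bar n^+(B)=n^+(B)+n_0(B)$ (extended coindex), $\sigma(B)=n^+(B)-n^-(B)$. Partial signatures: let $\mathbf L$ be a smooth curve of bounded self-adjoint operators on a real Hilbert space $\mathcal H$ with inner product $\langle\cdot,\cdot\rangle$, defined on an interval containing $t_0$ (one-sided derivatives are used if $t_0$ is an endpoint), such that $t_0$ is an isolated degeneracy instant ($\mathbf L(t_0)$ has a nontrivial finite-dimensional kernel and $\mathbf L(t)$ is invertible for $t\neq t_0$ near $t_0$). A root function for $\mathbf L$ at $t_0$ is a smooth map $u$ from a neighborhood of $t_0$ into $\mathcal H$ with $u(t_0)\in\mathrm{Ker}\,\mathbf L(t_0)$; its order $\mathrm{ord}(u)$ is the (possibly infinite) order of vanishing at $t_0$ of $t\mapsto\mathbf L(t)u(t)$. For $k\ge1$, $W_k=\{u(t_0): u \text{ root function with } \mathrm{ord}(u)\ge k\}\subseteq\mathrm{Ker}\,\mathbf L(t_0)$, and $B_k(u_0,v_0)=\frac1{k!}\big\langle\frac{d^k}{dt^k}\big|_{t=t_0}[\mathbf L(t)u(t)],v_0\big\rangle$ for $u_0,v_0\in W_k$, where $u$ is any root function with $\mathrm{ord}(u)\ge k$ and $u(t_0)=u_0$; $B_k$ is a well-defined symmetric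 bilinear form on $W_k$. The $k$-th partial index, coindex and signature are $n^-_k(\mathbf L,t_0)=n^-(B_k)$, $n^+_k(\mathbf L,t_0)=n^+(B_k)$, $\sigma_k(\mathbf L,t_0)=\sigma(B_k)$. *)

theory Defs
  imports "HOL-Analysis.Analysis"
begin

definition deriv_seq :: "real set \<Rightarrow> (real \<Rightarrow> 'a::real_normed_vector) \<Rightarrow> (nat \<Rightarrow> real \<Rightarrow> 'a) \<Rightarrow> bool" where
  "deriv_seq S f D \<longleftrightarrow> (\<forall>t\<in>S. D 0 t = f t) \<and>
     (\<forall>n. \<forall>t\<in>S. (D n has_vector_derivative D (Suc n) t) (at t within S))"

definition smooth_on :: "real set \<Rightarrow> (real \<Rightarrow> 'a::real_normed_vector) \<Rightarrow> bool" where
  "smooth_on S f \<longleftrightarrow> (\<exists>D. deriv_seq S f D)"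

text \<open>n-th derivative of f within S (well defined on S when S is a nondegenerate interval)\<close>
definition hderiv :: "real set \<Rightarrow> (real \<Rightarrow> 'a::real_normed_vector) \<Rightarrow> nat \<Rightarrow> real \<Rightarrow> 'a" where
  "hderiv S f = (SOME D. deriv_seq S f D)"

definition diag_basis :: "('v::real_vector \<Rightarrow> 'v \<Rightarrow> real) \<Rightarrow> 'v set \<Rightarrow> 'v set \<Rightarrow> bool" where
  "diag_basis B W b \<longleftrightarrow> b \<subseteq> W \<and> independent b \<and> span b = W \<and>
     (\<forall>x\<in>b. \<forall>y\<in>b. x \<noteq> y \<longrightarrow> B x y = 0)"

definition coindex_form :: "('v::real_vector \<Rightarrow> 'v \<Rightarrow> real) \<Rightarrow> 'v set \<Rightarrow> nat" where
  "coindex_form B W = card {x \<in> (SOME b. diag_basis B W b). B x x > 0}"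

definition index_form :: "('v::real_vector \<Rightarrow> 'v \<Rightarrow> real) \<Rightarrow> 'v set \<Rightarrow> nat" where
  "index_form B W = card {x \<in> (SOME b. diag_basis B W b). B x x < 0}"

definition signature_form :: "('v::real_vector \<Rightarrow> 'v \<Rightarrow> real) \<Rightarrow> 'v set \<Rightarrow> int" where
  "signature_form B W = int (coindex_form B W) - int (index_form B W)"

definition op_form :: "('v::real_inner \<Rightarrow>\<^sub>L 'v) \<Rightarrow> 'v \<Rightarrow> 'v \<Rightarrow> real" where
  "op_form T x y = inner (blinfun_apply T x) y"

definition coindex_op :: "('v::euclidean_space \<Rightarrow>\<^sub>L 'v) \<Rightarrow> nat" where
  "coindex_op T = coindex_form (op_form T) UNIV"

definition nullity_op :: "('v::euclidean_space \<Rightarrow>\<^sub>L 'v) \<Rightarrow> nat" where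
  "nullity_op T = dim {x. blinfun_apply T x = 0}"

definition ext_coindex_op :: "('v::euclidean_space \<Rightarrow>\<^sub>L 'v) \<Rightarrow> nat" where
  "ext_coindex_op T = coindex_op T + nullity_op T"

definition nbhds_in :: "real set \<Rightarrow> real \<Rightarrow> real set set" where
  "nbhds_in S t0 = {S \<inter> cball t0 \<delta> | \<delta>. \<delta> > 0}"

definition is_root_fun :: "(real \<Rightarrow> ('v::euclidean_space \<Rightarrow>\<^sub>L 'v)) \<Rightarrow> real set \<Rightarrow> real \<Rightarrow> real set \<Rightarrow> (real \<Rightarrow> 'v) \<Rightarrow> bool" where
  "is_root_fun L S t0 T u \<longleftrightarrow> T \<in> nbhds_in S t0 \<and> smooth_on T u \<and> blinfun_apply (L t0) (u t0) = 0"

definition root_ord_ge :: "(real \<Rightarrow> ('v::euclidean_space \<Rightarrow>\<^sub>L 'v)) \<Rightarrow> real \<Rightarrow> real set \<Rightarrow> (real \<Rightarrow> 'v) \<Rightarrow> nat \<Rightarrow> bool" where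
  "root_ord_ge L t0 T u k \<longleftrightarrow> (\<forall>j<k. hderiv T (\<lambda>t. blinfun_apply (L t) (u t)) j t0 = 0)"

definition W_space :: "(real \<Rightarrow> ('v::euclidean_space \<Rightarrow>\<^sub>L 'v)) \<Rightarrow> real set \<Rightarrow> real \<Rightarrow> nat \<Rightarrow> 'v set" where
  "W_space L S t0 k = {u t0 | u T. is_root_fun L S t0 T u \<and> root_ord_ge L t0 T u k}"

definition B_form :: "(real \<Rightarrow> ('v::euclidean_space \<Rightarrow>\<^sub>L 'v)) \<Rightarrow> real set \<Rightarrow> real \<Rightarrow> nat \<Rightarrow> 'v \<Rightarrow> 'v \<Rightarrow> real" where
  "B_form L S t0 k u0 v0 = (SOME r. \<exists>u T. is_root_fun L S t0 T u \<and> root_ord_ge L t0 T u k \<and> u t0 = u0 \<and>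
      r = inner (hderiv T (\<lambda>t. blinfun_apply (L t) (u t)) k t0) v0 / fact k)"

definition partial_coindex :: "(real \<Rightarrow> ('v::euclidean_space \<Rightarrow>\<^sub>L 'v)) \<Rightarrow> real set \<Rightarrow> real \<Rightarrow> nat \<Rightarrow> nat" where
  "partial_coindex L S t0 k = coindex_form (B_form L S t0 k) (W_space L S t0 k)"

definition partial_index :: "(real \<Rightarrow> ('v::euclidean_space \<Rightarrow>\<^sub>L 'v)) \<Rightarrow> real set \<Rightarrow> real \<Rightarrow> nat \<Rightarrow> nat" where
  "partial_index L S t0 k = index_form (B_form L S t0 k) (W_space L S t0 k)"

definition partial_signature :: "(real \<Rightarrow> ('v::euclidean_space \<Rightarrow>\<^sub>L 'v)) \<Rightarrow> real set \<Rightarrow> real \<Rightarrow> nat \<Rightarrow> int" where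
  "partial_signature L S t0 k = signature_form (B_form L S t0 k) (W_space L S t0 k)"

end

theory Submission
  imports Defs
begin

(* In the orthonormal eigenframe v_i(t) everything diagonalises.  Pairing the Leibniz expansion
   of (L u)^(p)(t0) with v_i(t0) shows that a root function u of order >= k has u(t0) orthogonal
   to every v_i(t0) whose eigenvalue vanishes at t0 to order < k, while combinations of the
   remaining v_i(t) are root functions of order >= k.  So W_k is spanned by the v_i(t0) with
   ord lambda_i >= k, and B_k is diagonal there with entries lambda_i^(k)(t0)/k!; by Sylvester's
   law of inertia the partial coindex (index) counts the eigenvalues with a zero of order exactly
   k and positive (negative) leading coefficient.  As lambda_i has no zero on the punctured
   interval, its sign at t0 + eps is that of the leading coefficient, and at t0 - eps that sign
   times (-1)^order; the jump formulas are then a count of eigenvalues by order parity and sign. *)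

section \<open>Higher derivatives and the Leibniz rule\<close>

lemma deriv_seq_subset: "deriv_seq S f D \<Longrightarrow> T \<subseteq> S \<Longrightarrow> deriv_seq T f D"
  unfolding deriv_seq_def by (meson has_vector_derivative_within_subset subsetD)

lemma deriv_seq_cong: "deriv_seq S f D \<Longrightarrow> (\<And>t. t \<in> S \<Longrightarrow> f t = g t) \<Longrightarrow> deriv_seq S g D"
  unfolding deriv_seq_def by auto

lemma deriv_seq_zero: "deriv_seq S f D \<Longrightarrow> t \<in> S \<Longrightarrow> D 0 t = f t"
  unfolding deriv_seq_def by auto

lemma deriv_seq_hderiv: "smooth_on S f \<Longrightarrow> deriv_seq S f (hderiv S f)"
  unfolding smooth_on_def hderiv_def by (rule someI_ex[of "deriv_seq S f"])

lemma deriv_seq_unique: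
  fixes a b :: real
  assumes "a < b" and D: "deriv_seq {a..b} f D" and E: "deriv_seq {a..b} f E" and "t \<in> {a..b}"
  shows "D n t = E n t"
  using \<open>t \<in> {a..b}\<close>
proof (induction n arbitrary: t)
  case 0
  then show ?case using D E by (simp add: deriv_seq_zero)
next
  case (Suc n)
  have "(D n has_vector_derivative D (Suc n) t) (at t within {a..b})"
    using D Suc.prems unfolding deriv_seq_def by blast
  moreover have "(D n has_vector_derivative E (Suc n) t) (at t within {a..b})"
  proof (rule has_vector_derivative_transform[OF Suc.prems])
    show "(E n has_vector_derivative E (Suc n) t) (at t within {a..b})"
      using E Suc.prems unfolding deriv_seq_def by blast
  qed (use Suc.IH in auto)
  ultimately show ?case
    using vector_derivative_unique_within_closed_interval[of a b t] \<open>a < b\<close> Suc.prems by simp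
qed

lemma hderiv_eq_deriv_seq:
  fixes a b :: real
  assumes "a < b" and "deriv_seq {a..b} f D" and "t \<in> {a..b}"
  shows "hderiv {a..b} f n t = D n t"
proof (rule deriv_seq_unique[OF assms(1) _ assms(2,3)])
  show "deriv_seq {a..b} f (hderiv {a..b} f)"
    unfolding hderiv_def by (rule someI[of _ D]) (rule assms(2))
qed

lemma deriv_seq_sum:
  "(\<And>i. i \<in> I \<Longrightarrow> deriv_seq S (f i) (D i)) \<Longrightarrow>
    deriv_seq S (\<lambda>t. \<Sum>i\<in>I. f i t) (\<lambda>n t. \<Sum>i\<in>I. D i n t)"
  unfolding deriv_seq_def by (auto intro!: has_vector_derivative_sum)

lemma deriv_seq_scaleR_const:
  "deriv_seq S f D \<Longrightarrow> deriv_seq S (\<lambda>t. c *\<^sub>R f t) (\<lambda>n t. c *\<^sub>R D n t)"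
  unfolding deriv_seq_def
  by (auto intro!: bounded_linear.has_vector_derivative[OF bounded_linear_scaleR_right])

lemma deriv_seq_continuous_on:
  assumes "deriv_seq S f D"
  shows "continuous_on S f"
proof -
  have "continuous_on S (D 0)"
    using assms unfolding deriv_seq_def continuous_on_eq_continuous_within
    by (metis has_vector_derivative_continuous)
  then show ?thesis
    by (rule continuous_on_eq) (use assms in \<open>auto simp: deriv_seq_zero\<close>)
qed

lemma deriv_seq_DERIV_interior:
  fixes D :: "nat \<Rightarrow> real \<Rightarrow> real"
  assumes "deriv_seq {a..b} f D" and "t \<in> {a<..<b}"
  shows "DERIV (D n) t :> D (Suc n) t"
proof -
  have "at t within {a..b} = at t"
    using assms(2) by (intro at_within_interior) auto
  moreover have "(D n has_vector_derivative D (Suc n) t) (at t within {a..b})"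
    using assms unfolding deriv_seq_def by auto
  ultimately show ?thesis
    by (simp add: has_real_derivative_iff_has_vector_derivative)
qed

definition leibniz_seq ::
  "('a::real_normed_vector \<Rightarrow> 'b::real_normed_vector \<Rightarrow> 'c::real_normed_vector) \<Rightarrow>
   (nat \<Rightarrow> real \<Rightarrow> 'a) \<Rightarrow> (nat \<Rightarrow> real \<Rightarrow> 'b) \<Rightarrow> nat \<Rightarrow> real \<Rightarrow> 'c" where
  "leibniz_seq bil D E n t = (\<Sum>i\<le>n. real (n choose i) *\<^sub>R bil (D i t) (E (n - i) t))"

lemma sum_binomial_scaleR_Suc:
  fixes P :: "nat \<Rightarrow> nat \<Rightarrow> 'a::real_vector"
  shows "(\<Sum>i\<le>n. real (n choose i) *\<^sub>R (P i (Suc (n - i)) + P (Suc i) (n - i)))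
       = (\<Sum>i\<le>Suc n. real (Suc n choose i) *\<^sub>R P i (Suc n - i))"
proof -
  have right: "(\<Sum>i\<le>Suc n. real (Suc n choose i) *\<^sub>R P i (Suc n - i))
     = P 0 (Suc n) + (\<Sum>i\<le>n. real (n choose i) *\<^sub>R P (Suc i) (n - i))
       + (\<Sum>i<n. real (n choose Suc i) *\<^sub>R P (Suc i) (n - i))"
    by (subst sum.atMost_Suc_shift)
       (simp add: scaleR_add_left sum.distrib lessThan_Suc_atMost[symmetric])
  have left: "(\<Sum>i\<le>n. real (n choose i) *\<^sub>R P i (Suc (n - i)))
      = P 0 (Suc n) + (\<Sum>i<n. real (n choose Suc i) *\<^sub>R P (Suc i) (n - i))"
    by (subst sum.atMost_shift) (auto intro!: sum.cong simp: Suc_diff_Suc)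
  show ?thesis
    unfolding right scaleR_add_right sum.distrib left by (simp add: algebra_simps)
qed

lemma deriv_seq_bilinear:
  assumes bil: "bounded_bilinear bil" and D: "deriv_seq S f D" and E: "deriv_seq S g E"
  shows "deriv_seq S (\<lambda>t. bil (f t) (g t)) (leibniz_seq bil D E)"
  unfolding deriv_seq_def
proof (intro conjI ballI allI)
  fix t assume "t \<in> S"
  then show "leibniz_seq bil D E 0 t = bil (f t) (g t)"
    using D E by (simp add: leibniz_seq_def deriv_seq_zero)
next
  fix n t assume t: "t \<in> S"
  have "(leibniz_seq bil D E n has_vector_derivative
      (\<Sum>i\<le>n. real (n choose i) *\<^sub>R (bil (D i t) (E (Suc (n - i)) t) + bil (D (Suc i) t) (E (n - i) t))))
      (at t within S)"
    unfolding leibniz_seq_def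
    using D E t unfolding deriv_seq_def
    by (intro has_vector_derivative_sum bounded_linear.has_vector_derivative[OF bounded_linear_scaleR_right]
        bounded_bilinear.has_vector_derivative[OF bil]) (auto simp: Suc_diff_le)
  then show "(leibniz_seq bil D E n has_vector_derivative leibniz_seq bil D E (Suc n) t) (at t within S)"
    unfolding leibniz_seq_def sum_binomial_scaleR_Suc[of n "\<lambda>i j. bil (D i t) (E j t)"] .
qed

lemma leibniz_seq_vanishing:
  assumes "bounded_bilinear bil" and "\<forall>i<n. D i t = 0"
  shows "leibniz_seq bil D E n t = bil (D n t) (E 0 t)"
proof -
  have "leibniz_seq bil D E n t
      = (\<Sum>i<n. real (n choose i) *\<^sub>R bil (D i t) (E (n - i) t)) + bil (D n t) (E 0 t)"
    unfolding leibniz_seq_def by (simp add: lessThan_Suc_atMost[symmetric])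
  also have "(\<Sum>i<n. real (n choose i) *\<^sub>R bil (D i t) (E (n - i) t)) = 0"
    using assms bounded_bilinear.zero_left by (intro sum.neutral) fastforce
  finally show ?thesis by simp
qed

section \<open>Sylvester's law of inertia\<close>

lemma bilinear_diagonal_sum:
  fixes B :: "'v::real_vector \<Rightarrow> 'v \<Rightarrow> real"
  assumes bil: "bilinear B" and "finite A" and diag: "\<forall>v\<in>A. \<forall>w\<in>A. v \<noteq> w \<longrightarrow> B v w = 0"
  shows "B (\<Sum>v\<in>A. u v *\<^sub>R v) (\<Sum>v\<in>A. u v *\<^sub>R v) = (\<Sum>v\<in>A. (u v)\<^sup>2 * B v v)"
proof -
  interpret left: linear "\<lambda>x. B x y" for y using bil by (simp add: bilinear_def)
  interpret right: linear "\<lambda>y. B x y" for x using bil by (simp add: bilinear_def)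
  have "B (\<Sum>v\<in>A. u v *\<^sub>R v) (\<Sum>v\<in>A. u v *\<^sub>R v) = (\<Sum>v\<in>A. u v * B v (\<Sum>w\<in>A. u w *\<^sub>R w))"
    by (simp add: left.sum left.scale)
  also have "\<dots> = (\<Sum>v\<in>A. u v * (\<Sum>w\<in>A. u w * B v w))"
    by (simp add: right.sum right.scale)
  also have "\<dots> = (\<Sum>v\<in>A. u v * (u v * B v v))"
  proof (rule sum.cong[OF refl])
    fix v assume "v \<in> A"
    then have "(\<Sum>w\<in>A. u w * B v w) = (\<Sum>w\<in>A. if w = v then u v * B v v else 0)"
      using diag by (intro sum.cong) auto
    then show "u v * (\<Sum>w\<in>A. u w * B v w) = u v * (u v * B v v)"
      using \<open>v \<in> A\<close> \<open>finite A\<close> by simp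
  qed
  finally show ?thesis
    by (simp add: power2_eq_square mult.assoc)
qed

lemma diagonal_form_pos_on_span:
  fixes B :: "'v::real_vector \<Rightarrow> 'v \<Rightarrow> real"
  assumes "bilinear B" and "finite A" and "\<forall>v\<in>A. \<forall>w\<in>A. v \<noteq> w \<longrightarrow> B v w = 0"
    and pos: "\<forall>v\<in>A. B v v > 0" and "y \<in> span A" and "y \<noteq> 0"
  shows "B y y > 0"
proof -
  obtain u where y: "y = (\<Sum>v\<in>A. u v *\<^sub>R v)"
    using \<open>y \<in> span A\<close> span_finite[OF \<open>finite A\<close>] by auto
  then obtain v where "v \<in> A" "u v \<noteq> 0"
    using \<open>y \<noteq> 0\<close> by (metis (no_types, lifting) scale_eq_0_iff sum.neutral)
  then have "(\<Sum>v\<in>A. (u v)\<^sup>2 * B v v) > 0"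
    using pos by (intro sum_pos2[OF \<open>finite A\<close>]) auto
  then show ?thesis
    unfolding y bilinear_diagonal_sum[OF assms(1-3)] .
qed

lemma diagonal_form_nonpos_on_span:
  fixes B :: "'v::real_vector \<Rightarrow> 'v \<Rightarrow> real"
  assumes "bilinear B" and "finite A" and "\<forall>v\<in>A. \<forall>w\<in>A. v \<noteq> w \<longrightarrow> B v w = 0"
    and nonpos: "\<forall>v\<in>A. B v v \<le> 0" and "y \<in> span A"
  shows "B y y \<le> 0"
proof -
  obtain u where y: "y = (\<Sum>v\<in>A. u v *\<^sub>R v)"
    using \<open>y \<in> span A\<close> span_finite[OF \<open>finite A\<close>] by auto
  have "(\<Sum>v\<in>A. (u v)\<^sup>2 * B v v) \<le> 0"
    using nonpos by (intro sum_nonpos) (simp add: mult_nonneg_nonpos)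
  then show ?thesis
    unfolding y bilinear_diagonal_sum[OF assms(1-3)] .
qed

text \<open>The positive vectors of one diagonal basis span a space on which
  the form is positive definite, and it meets the span of the non-positive vectors of another
  diagonal basis only in 0.\<close>

lemma diag_basis_card_pos_le:
  fixes B :: "'v::euclidean_space \<Rightarrow> 'v \<Rightarrow> real"
  assumes bil: "bilinear B" and b: "diag_basis B W b" and b': "diag_basis B W b'"
  shows "card {x\<in>b. B x x > 0} \<le> card {x\<in>b'. B x x > 0}"
proof -
  define P where "P = {x\<in>b. B x x > 0}"
  define N where "N = {x\<in>b'. \<not> B x x > 0}"
  have ind: "independent b" "independent b'" and W: "W = span b" "W = span b'"
    using b b' unfolding diag_basis_def by auto
  have fin: "finite P" "finite N"
    using finiteI_independent[OF ind(1)] finiteI_independent[OF ind(2)] unfolding P_def N_def by auto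
  have diag: "\<forall>v\<in>P. \<forall>w\<in>P. v \<noteq> w \<longrightarrow> B v w = 0" "\<forall>v\<in>N. \<forall>w\<in>N. v \<noteq> w \<longrightarrow> B v w = 0"
    using b b' unfolding diag_basis_def P_def N_def by auto
  have trivial_meet: "span P \<inter> span N = {0}"
  proof (intro equalityI subsetI)
    fix y assume y: "y \<in> span P \<inter> span N"
    have "B y y \<le> 0"
      using y by (intro diagonal_form_nonpos_on_span[OF bil fin(2) diag(2)]) (auto simp: N_def)
    moreover have "y \<noteq> 0 \<Longrightarrow> B y y > 0"
      using y by (intro diagonal_form_pos_on_span[OF bil fin(1) diag(1)]) (auto simp: P_def)
    ultimately show "y \<in> {0}" by force
  qed (simp add: span_zero)
  have "dim (span P) = card P"
    by (rule dim_span_eq_card_independent, rule independent_mono[OF ind(1)]) (simp add: P_def)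
  moreover have "dim (span N) = card N"
    by (rule dim_span_eq_card_independent, rule independent_mono[OF ind(2)]) (simp add: N_def)
  ultimately have dims: "dim (span P) = card P" "dim (span N) = card N" .
  have sum_in_W: "{x + y |x y. x \<in> span P \<and> y \<in> span N} \<subseteq> W"
  proof -
    have "span P \<subseteq> span b" "span N \<subseteq> span b'"
      by (auto intro!: span_mono simp: P_def N_def)
    then have "span P \<subseteq> W" "span N \<subseteq> W"
      using W by simp_all
    then show ?thesis
      using subspace_span[of b] W by (auto intro: subspace_add)
  qed
  have "dim {x + y |x y. x \<in> span P \<and> y \<in> span N} + dim (span P \<inter> span N)
      = dim (span P) + dim (span N)"
    by (rule dim_sums_Int) auto
  then have "card P + card N = dim {x + y |x y. x \<in> span P \<and> y \<in> span N}"
    unfolding trivial_meet dims by (simp add: dim_insert)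
  also have "\<dots> \<le> dim W"
    by (rule dim_subset[OF sum_in_W])
  also have "dim W = card b'"
    unfolding W(2) by (rule dim_span_eq_card_independent[OF ind(2)])
  also have "card b' = card {x\<in>b'. B x x > 0} + card N"
  proof -
    have "b' = {x\<in>b'. B x x > 0} \<union> N" "{x\<in>b'. B x x > 0} \<inter> N = {}"
      unfolding N_def by auto
    then show ?thesis
      using finiteI_independent[OF ind(2)] by (metis card_Un_disjoint finite_Un)
  qed
  finally show ?thesis
    unfolding P_def by simp
qed

lemma coindex_index_form_diag_basis:
  fixes B B' :: "'v::euclidean_space \<Rightarrow> 'v \<Rightarrow> real"
  assumes bil: "bilinear B" and agree: "\<forall>x\<in>W. \<forall>y\<in>W. B' x y = B x y" and b: "diag_basis B W b"
  shows "coindex_form B' W = card {x\<in>b. B x x > 0} \<and> index_form B' W = card {x\<in>b. B x x < 0}"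
proof -
  define b' where "b' = (SOME b. diag_basis B' W b)"
  have "diag_basis B' W = diag_basis B W"
  proof
    fix c
    show "diag_basis B' W c = diag_basis B W c"
    proof (cases "c \<subseteq> W")
      case True
      then have "\<forall>x\<in>c. \<forall>y\<in>c. B' x y = B x y"
        using agree by blast
      then show ?thesis
        unfolding diag_basis_def by auto
    qed (simp add: diag_basis_def)
  qed
  then have b': "diag_basis B W b'"
    unfolding b'_def by (simp add: someI[of _ b] b)
  then have "b' \<subseteq> W"
    unfolding diag_basis_def by auto
  then have "coindex_form B' W = card {x\<in>b'. B x x > 0}" "index_form B' W = card {x\<in>b'. B x x < 0}"
    unfolding coindex_form_def index_form_def b'_def[symmetric]
    using agree by (intro arg_cong[where f = card]; auto)+
  moreover have "card {x\<in>b'. B x x > 0} = card {x\<in>b. B x x > 0}"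
    using diag_basis_card_pos_le[OF bil b b'] diag_basis_card_pos_le[OF bil b' b] by simp
  moreover have "card {x\<in>b'. - B x x > 0} = card {x\<in>b. - B x x > 0}"
  proof -
    have bil': "bilinear (\<lambda>x y. - B x y)"
      using bil unfolding bilinear_def by (auto intro: linear_compose_neg)
    have "diag_basis (\<lambda>x y. - B x y) W = diag_basis B W"
      unfolding diag_basis_def by (auto intro!: ext)
    then have "diag_basis (\<lambda>x y. - B x y) W b" "diag_basis (\<lambda>x y. - B x y) W b'"
      using b b' by simp_all
    then show ?thesis
      using diag_basis_card_pos_le[OF bil'] by (meson order_antisym)
  qed
  ultimately show ?thesis
    by simp
qed

section \<open>Orthonormal eigenframes\<close>

definition diag_form :: "(nat \<Rightarrow> 'v::real_inner) \<Rightarrow> (nat \<Rightarrow> real) \<Rightarrow> nat set \<Rightarrow> 'v \<Rightarrow> 'v \<Rightarrow> real" where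
  "diag_form e c I x y = (\<Sum>i\<in>I. c i * inner x (e i) * inner (e i) y)"

lemma bilinear_diag_form: "bilinear (diag_form e c I)"
  unfolding bilinear_def
proof (intro conjI allI)
  fix x show "linear (diag_form e c I x)"
    by (rule linearI) (simp_all add: diag_form_def inner_add_right sum.distrib algebra_simps sum_distrib_left)
next
  fix y show "linear (\<lambda>x. diag_form e c I x y)"
    by (rule linearI) (simp_all add: diag_form_def inner_add_left sum.distrib algebra_simps sum_distrib_left)
qed

lemma diag_form_commute: "diag_form e c I x y = diag_form e c I y x"
  unfolding diag_form_def by (simp add: inner_commute mult.commute mult.left_commute)

locale orthonormal_frame =
  fixes e :: "nat \<Rightarrow> 'v::euclidean_space"
  assumes orthonormal: "i < DIM('v) \<Longrightarrow> j < DIM('v) \<Longrightarrow> inner (e i) (e j) = (if i = j then 1 else 0)"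
begin

lemma inner_sum_frame:
  assumes "I \<subseteq> {..<DIM('v)}" and "j < DIM('v)"
  shows "inner (\<Sum>i\<in>I. c i *\<^sub>R e i) (e j) = (if j \<in> I then c j else 0)"
proof -
  have "inner (\<Sum>i\<in>I. c i *\<^sub>R e i) (e j) = (\<Sum>i\<in>I. if i = j then c i else 0)"
    unfolding inner_sum_left using assms by (intro sum.cong) (auto simp: orthonormal)
  also have "\<dots> = (if j \<in> I then c j else 0)"
    using finite_subset[OF assms(1)] by (simp add: sum.delta)
  finally show ?thesis .
qed

lemma frame_nonzero: "i < DIM('v) \<Longrightarrow> e i \<noteq> 0"
  using orthonormal[of i i] by auto

lemma inj_on_frame: "inj_on e {..<DIM('v)}"
proof (rule inj_onI)
  fix i j assume "i \<in> {..<DIM('v)}" "j \<in> {..<DIM('v)}" "e i = e j"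
  then show "i = j"
    using orthonormal[of i i] orthonormal[of i j] by (auto split: if_splits)
qed

lemma card_frame_image: "I \<subseteq> {..<DIM('v)} \<Longrightarrow> card (e ` I) = card I"
  by (rule card_image) (rule inj_on_subset[OF inj_on_frame])

lemma independent_frame:
  assumes "I \<subseteq> {..<DIM('v)}"
  shows "independent (e ` I)"
proof (rule pairwise_orthogonal_independent)
  show "pairwise orthogonal (e ` I)"
    using assms by (auto simp: pairwise_def orthogonal_def orthonormal subset_iff)
  show "0 \<notin> e ` I"
    using assms frame_nonzero by force
qed

lemma dim_span_frame: "I \<subseteq> {..<DIM('v)} \<Longrightarrow> dim (span (e ` I)) = card I"
  using dim_span_eq_card_independent[OF independent_frame] card_frame_image by simp

lemma span_frame: "span (e ` {..<DIM('v)}) = UNIV"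
proof -
  have "card (e ` {..<DIM('v)}) = dim (UNIV :: 'v set)"
    by (simp add: card_frame_image)
  then have "UNIV \<subseteq> span (e ` {..<DIM('v)})"
    using card_eq_dim[of "e ` {..<DIM('v)}" UNIV] independent_frame[of "{..<DIM('v)}"] by simp
  then show ?thesis
    by auto
qed

lemma frame_expansion: "x = (\<Sum>i<DIM('v). inner x (e i) *\<^sub>R e i)"
proof -
  define y where "y = x - (\<Sum>i<DIM('v). inner x (e i) *\<^sub>R e i)"
  have "orthogonal y z" if "z \<in> span (e ` {..<DIM('v)})" for z
    using that by (rule orthogonal_to_span)
       (auto simp: y_def orthogonal_def inner_diff_left inner_sum_frame)
  then have "inner y y = 0"
    using span_frame by (simp add: orthogonal_def)
  then show ?thesis
    unfolding y_def by simp
qed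

lemma in_span_frame_iff:
  assumes "I \<subseteq> {..<DIM('v)}"
  shows "x \<in> span (e ` I) \<longleftrightarrow> (\<forall>j<DIM('v). j \<notin> I \<longrightarrow> inner x (e j) = 0)"
proof
  assume x: "x \<in> span (e ` I)"
  show "\<forall>j<DIM('v). j \<notin> I \<longrightarrow> inner x (e j) = 0"
  proof (intro allI impI)
    fix j assume "j < DIM('v)" "j \<notin> I"
    then have "orthogonal (e j) x"
      using assms by (intro orthogonal_to_span[OF x]) (auto simp: orthogonal_def orthonormal subset_iff)
    then show "inner x (e j) = 0"
      by (simp add: orthogonal_def inner_commute)
  qed
next
  assume "\<forall>j<DIM('v). j \<notin> I \<longrightarrow> inner x (e j) = 0"
  then have "x = (\<Sum>i\<in>I. inner x (e i) *\<^sub>R e i)"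
    using assms by (subst frame_expansion) (auto intro!: sum.mono_neutral_right)
  also have "\<dots> \<in> span (e ` I)"
    by (intro span_sum span_scale span_base) auto
  finally show "x \<in> span (e ` I)" .
qed

lemma frame_expansion_span:
  assumes "I \<subseteq> {..<DIM('v)}" and "x \<in> span (e ` I)"
  shows "x = (\<Sum>i\<in>I. inner x (e i) *\<^sub>R e i)"
  using assms in_span_frame_iff[OF assms(1)]
  by (subst frame_expansion) (auto intro!: sum.mono_neutral_right)



lemma diag_form_frame_right:
  assumes "I \<subseteq> {..<DIM('v)}" and "j < DIM('v)"
  shows "diag_form e c I x (e j) = (if j \<in> I then c j * inner x (e j) else 0)"
proof -
  have "diag_form e c I x (e j) = (\<Sum>i\<in>I. if i = j then c j * inner x (e j) else 0)"
    unfolding diag_form_def using assms by (intro sum.cong) (auto simp: orthonormal)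
  then show ?thesis
    using finite_subset[OF assms(1)] by (simp add: sum.delta)
qed

lemma diag_form_frame_left:
  assumes "I \<subseteq> {..<DIM('v)}" and "i \<in> I"
  shows "diag_form e c I (a *\<^sub>R e i) y = c i * inner (a *\<^sub>R e i) y"
  using assms diag_form_frame_right[of I i c y]
  by (auto simp: diag_form_commute[of e c I _ y] bilinear_rmul[OF bilinear_diag_form] inner_commute)

lemma coindex_index_diag_form:
  assumes I: "I \<subseteq> {..<DIM('v)}"
    and agree: "\<forall>x\<in>span (e ` I). \<forall>y\<in>span (e ` I). B x y = diag_form e c I x y"
  shows "coindex_form B (span (e ` I)) = card {i\<in>I. c i > 0}
    \<and> index_form B (span (e ` I)) = card {i\<in>I. c i < 0}"
proof -
  have on_frame: "diag_form e c I (e a) (e b) = (if a = b then c a else 0)" if "a \<in> I" "b \<in> I" for a b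
    using that I diag_form_frame_right[OF I, of b c "e a"] by (auto simp: orthonormal subset_iff)
  have "diag_basis (diag_form e c I) (span (e ` I)) (e ` I)"
    unfolding diag_basis_def using independent_frame[OF I] on_frame
    by (auto simp: span_superset)
  then have counts: "coindex_form B (span (e ` I)) = card {x\<in>e ` I. diag_form e c I x x > 0}
      \<and> index_form B (span (e ` I)) = card {x\<in>e ` I. diag_form e c I x x < 0}"
    by (rule coindex_index_form_diag_basis[OF bilinear_diag_form agree])
  have on_indices: "card {x\<in>e ` I. P (diag_form e c I x x)} = card {i\<in>I. P (c i)}" for P
  proof -
    have "{x\<in>e ` I. P (diag_form e c I x x)} = e ` {i\<in>I. P (c i)}"
      using on_frame by auto
    then show ?thesis
      using card_frame_image[of "{i\<in>I. P (c i)}"] I by auto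
  qed
  show ?thesis
    using counts on_indices[of "\<lambda>r. r > 0"] on_indices[of "\<lambda>r. r < 0"] by simp
qed

lemma op_form_eigenframe:
  assumes eig: "\<And>i. i < DIM('v) \<Longrightarrow> blinfun_apply T (e i) = \<mu> i *\<^sub>R e i"
  shows "op_form T = diag_form e \<mu> {..<DIM('v)}"
proof (intro ext)
  fix x y
  have "blinfun_apply T x = blinfun_apply T (\<Sum>i<DIM('v). inner x (e i) *\<^sub>R e i)"
    by (rule arg_cong[OF frame_expansion])
  also have "\<dots> = (\<Sum>i<DIM('v). (\<mu> i * inner x (e i)) *\<^sub>R e i)"
    by (simp add: blinfun.sum_right blinfun.scaleR_right eig mult.commute)
  finally have "blinfun_apply T x = (\<Sum>i<DIM('v). (\<mu> i * inner x (e i)) *\<^sub>R e i)" .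
  then show "op_form T x y = diag_form e \<mu> {..<DIM('v)} x y"
    by (simp add: op_form_def diag_form_def inner_sum_left)
qed

lemma coindex_op_eigenframe:
  assumes "\<And>i. i < DIM('v) \<Longrightarrow> blinfun_apply T (e i) = \<mu> i *\<^sub>R e i"
  shows "coindex_op T = card {i. i < DIM('v) \<and> \<mu> i > 0}"
proof -
  have "coindex_op T = coindex_form (op_form T) (span (e ` {..<DIM('v)}))"
    by (simp add: coindex_op_def span_frame)
  also have "\<dots> = card {i\<in>{..<DIM('v)}. \<mu> i > 0}"
    using coindex_index_diag_form[of "{..<DIM('v)}" "op_form T" \<mu>] op_form_eigenframe[OF assms]
    by simp
  finally show ?thesis
    by simp
qed

lemma inner_eigenframe:
  assumes eig: "\<And>i. i < DIM('v) \<Longrightarrow> blinfun_apply T (e i) = \<mu> i *\<^sub>R e i" and "j < DIM('v)"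
  shows "inner (blinfun_apply T x) (e j) = \<mu> j * inner x (e j)"
  using diag_form_frame_right[of "{..<DIM('v)}" j \<mu> x] \<open>j < DIM('v)\<close>
    fun_cong[OF fun_cong[OF op_form_eigenframe[OF eig]], of x "e j"]
  by (simp add: op_form_def)

lemma kernel_eigenframe:
  assumes eig: "\<And>i. i < DIM('v) \<Longrightarrow> blinfun_apply T (e i) = \<mu> i *\<^sub>R e i"
  shows "{x. blinfun_apply T x = 0} = span (e ` {i. i < DIM('v) \<and> \<mu> i = 0})"
proof -
  have "blinfun_apply T x = 0 \<longleftrightarrow> (\<forall>j<DIM('v). \<mu> j = 0 \<or> inner x (e j) = 0)" for x
  proof
    assume "\<forall>j<DIM('v). \<mu> j = 0 \<or> inner x (e j) = 0"
    then show "blinfun_apply T x = 0"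
      using inner_eigenframe[OF eig] by (subst frame_expansion) (auto intro!: sum.neutral)
  next
    assume "blinfun_apply T x = 0"
    then show "\<forall>j<DIM('v). \<mu> j = 0 \<or> inner x (e j) = 0"
      using inner_eigenframe[OF eig, of _ x] by simp
  qed
  moreover have "{i. i < DIM('v) \<and> \<mu> i = 0} \<subseteq> {..<DIM('v)}"
    by auto
  ultimately show ?thesis
    using in_span_frame_iff by auto
qed

lemma nullity_op_eigenframe:
  assumes "\<And>i. i < DIM('v) \<Longrightarrow> blinfun_apply T (e i) = \<mu> i *\<^sub>R e i"
  shows "nullity_op T = card {i. i < DIM('v) \<and> \<mu> i = 0}"
proof -
  have "nullity_op T = dim (span (e ` {i. i < DIM('v) \<and> \<mu> i = 0}))"
    using kernel_eigenframe[OF assms] by (simp only: nullity_op_def)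
  also have "\<dots> = card {i. i < DIM('v) \<and> \<mu> i = 0}"
    by (rule dim_span_frame) auto
  finally show ?thesis .
qed

end

section \<open>The sign of a function near a zero of finite order\<close>

lemma sign_near_zero_of_order:
  fixes D :: "nat \<Rightarrow> real \<Rightarrow> real"
  assumes der: "\<And>n t. t \<in> {a<..<b} \<Longrightarrow> DERIV (D n) t :> D (Suc n) t" and t0: "t0 \<in> {a<..<b}"
    and "\<forall>j<p. D (m + j) t0 = 0" and "D (m + p) t0 \<noteq> 0"
  shows "\<exists>\<delta>>0. (\<forall>t. t0 < t \<and> t < t0 + \<delta> \<longrightarrow> D m t * D (m + p) t0 > 0) \<and>
               (\<forall>t. t0 - \<delta> < t \<and> t < t0 \<longrightarrow> (-1)^p * D m t * D (m + p) t0 > 0)"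
  using assms(3,4)
proof (induction p arbitrary: m)
  case 0
  define c where "c = D m t0"
  have "c \<noteq> 0"
    using "0.prems" by (simp add: c_def)
  have "isCont (D m) t0"
    using der[OF t0] by (rule DERIV_isCont)
  then have "(\<lambda>t. D m t * c) \<midarrow>t0\<rightarrow> c * c"
    unfolding c_def isCont_def by (intro tendsto_mult_right)
  moreover have "c * c > 0"
    using not_real_square_gt_zero[of c] \<open>c \<noteq> 0\<close> by blast
  ultimately obtain s where "s > 0"
    and s: "\<And>t. t \<noteq> t0 \<and> norm (t - t0) < s \<Longrightarrow> norm (D m t * c - c * c) < c * c"
    using LIM_D by blast
  have "D m t * c > 0" if "t \<noteq> t0" "\<bar>t - t0\<bar> < s" for t
    using s[of t] that by (auto simp: abs_less_iff)
  then show ?case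
    using \<open>s > 0\<close> by (intro exI[of _ s]) (auto simp: c_def)
next
  case (Suc p)
  define c where "c = D (m + Suc p) t0"
  have "D m t0 = 0"
    using Suc.prems(1) by (metis add_0_right zero_less_Suc)
  have "\<forall>j<p. D (Suc m + j) t0 = 0"
    using Suc.prems(1) by (metis add_Suc_right add_Suc_shift Suc_mono)
  then obtain \<delta> where "\<delta> > 0"
    and right: "\<And>t. t0 < t \<and> t < t0 + \<delta> \<Longrightarrow> D (Suc m) t * c > 0"
    and left: "\<And>t. t0 - \<delta> < t \<and> t < t0 \<Longrightarrow> (-1)^p * D (Suc m) t * c > 0"
    using Suc.IH[of "Suc m"] Suc.prems(2) unfolding c_def by auto
  define \<delta>' where "\<delta>' = min \<delta> (min (b - t0) (t0 - a))"
  have "\<delta>' > 0"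
    using \<open>\<delta> > 0\<close> t0 by (auto simp: \<delta>'_def)
  have "D m t * c > 0" if t: "t0 < t" "t < t0 + \<delta>'" for t
  proof -
    have "\<And>x. t0 \<le> x \<Longrightarrow> x \<le> t \<Longrightarrow> DERIV (D m) x :> D (Suc m) x"
      by (rule der) (use t t0 in \<open>auto simp: \<delta>'_def\<close>)
    from MVT2[OF t(1) this] obtain z where z: "t0 < z" "z < t" "D m t - D m t0 = (t - t0) * D (Suc m) z"
      by blast
    then have "(t - t0) * (D (Suc m) z * c) > 0"
      using right[of z] t by (simp add: \<delta>'_def)
    then show ?thesis
      using z \<open>D m t0 = 0\<close> by (simp add: mult.assoc)
  qed
  moreover have "(-1)^Suc p * D m t * c > 0" if t: "t0 - \<delta>' < t" "t < t0" for t
  proof -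
    have "\<And>x. t \<le> x \<Longrightarrow> x \<le> t0 \<Longrightarrow> DERIV (D m) x :> D (Suc m) x"
      by (rule der) (use t t0 in \<open>auto simp: \<delta>'_def\<close>)
    from MVT2[OF t(2) this] obtain z where z: "t < z" "z < t0" "D m t0 - D m t = (t0 - t) * D (Suc m) z"
      by blast
    have Dmt: "D m t = - ((t0 - t) * D (Suc m) z)"
      using z \<open>D m t0 = 0\<close> by simp
    have "(-1)^Suc p * D m t * c = (t0 - t) * ((-1)^p * D (Suc m) z * c)"
      unfolding Dmt by (simp add: algebra_simps)
    moreover have "(t0 - t) * ((-1)^p * D (Suc m) z * c) > 0"
      using left[of z] t z by (simp add: \<delta>'_def)
    ultimately show ?thesis
      by simp
  qed
  ultimately show ?case
    using \<open>\<delta>' > 0\<close> unfolding c_def by blast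
qed

lemma continuous_nonvanishing_same_sign:
  fixes f :: "real \<Rightarrow> real"
  assumes "x \<le> y" and "continuous_on {x..y} f" and "\<forall>t\<in>{x..y}. f t \<noteq> 0"
  shows "f x * f y > 0"
proof (rule ccontr)
  assume "\<not> f x * f y > 0"
  moreover have "f x \<noteq> 0" "f y \<noteq> 0"
    using assms(1,3) by auto
  ultimately have "(f x < 0 \<and> 0 < f y) \<or> (f y < 0 \<and> 0 < f x)"
    by (auto simp: zero_less_mult_iff linorder_neq_iff)
  then obtain z where "x \<le> z" "z \<le> y" "f z = 0"
    using IVT'[of f x 0 y] IVT2'[of f y 0 x] assms(1,2) by force
  then show False
    using assms(3) by auto
qed

lemma sign_at_ends_of_order:
  fixes f :: "real \<Rightarrow> real"
  assumes "\<epsilon> > 0" and D: "deriv_seq {t0 - \<epsilon>..t0 + \<epsilon>} f D"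
    and "\<forall>j<p. D j t0 = 0" and "D p t0 \<noteq> 0"
    and nonzero: "\<forall>t\<in>{t0 - \<epsilon>..t0 + \<epsilon>}. t \<noteq> t0 \<longrightarrow> f t \<noteq> 0"
  shows "f (t0 + \<epsilon>) * D p t0 > 0" and "(-1)^p * f (t0 - \<epsilon>) * D p t0 > 0"
proof -
  have "t0 \<in> {t0 - \<epsilon><..<t0 + \<epsilon>}"
    using \<open>\<epsilon> > 0\<close> by auto
  then obtain \<delta> where "\<delta> > 0"
    and right: "\<And>t. t0 < t \<and> t < t0 + \<delta> \<Longrightarrow> D 0 t * D p t0 > 0"
    and left: "\<And>t. t0 - \<delta> < t \<and> t < t0 \<Longrightarrow> (-1)^p * D 0 t * D p t0 > 0"
    using sign_near_zero_of_order[of "t0 - \<epsilon>" "t0 + \<epsilon>" D t0 p 0] assms(3,4)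
      deriv_seq_DERIV_interior[OF D] by auto
  define h where "h = min \<delta> \<epsilon> / 2"
  have h: "0 < h" "h < \<delta>" "h < \<epsilon>"
    using \<open>\<delta> > 0\<close> \<open>\<epsilon> > 0\<close> by (auto simp: h_def)
  have cont: "continuous_on {x..y} f" if "{x..y} \<subseteq> {t0 - \<epsilon>..t0 + \<epsilon>}" for x y
    using continuous_on_subset[OF deriv_seq_continuous_on[OF D] that] .
  have "f (t0 + h) * f (t0 + \<epsilon>) > 0"
    using h nonzero by (intro continuous_nonvanishing_same_sign cont) auto
  moreover have "f (t0 + h) * D p t0 > 0"
    using right[of "t0 + h"] h deriv_seq_zero[OF D, of "t0 + h"] by simp
  ultimately show "f (t0 + \<epsilon>) * D p t0 > 0"
    by (auto simp: zero_less_mult_iff)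
  define s where "s = (-1)^p * D p t0"
  have "f (t0 - \<epsilon>) * f (t0 - h) > 0"
    using h nonzero by (intro continuous_nonvanishing_same_sign cont) auto
  moreover have "f (t0 - h) * s > 0"
    using left[of "t0 - h"] h deriv_seq_zero[OF D, of "t0 - h"] by (simp add: s_def mult_ac)
  ultimately have "f (t0 - \<epsilon>) * s > 0"
    by (auto simp: zero_less_mult_iff)
  then show "(-1)^p * f (t0 - \<epsilon>) * D p t0 > 0"
    by (simp add: s_def mult_ac)
qed

lemma int_card_eq_sum_indicator:
  fixes n :: nat
  shows "int (card {i. i < n \<and> P i}) = (\<Sum>i<n. if P i then 1 else 0)"
proof -
  have "card {i. i < n \<and> P i} = (\<Sum>i\<in>{i\<in>{..<n}. P i}. 1)"
    by (simp add: lessThan_def)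
  also have "\<dots> = (\<Sum>i<n. if P i then 1 else 0)"
    by (rule sum.inter_filter) simp
  finally show ?thesis
    by (auto simp: of_nat_sum intro!: sum.cong)
qed

lemma sum_indicator_fibres:
  fixes g :: "nat \<Rightarrow> nat"
  assumes "inj_on g K" and "finite K"
  shows "(\<Sum>k\<in>K. \<Sum>i<n. if f i = g k \<and> Q i then 1 else 0 :: int)
       = (\<Sum>i<n. if f i \<in> g ` K \<and> Q i then 1 else 0)"
proof -
  have "(\<Sum>k\<in>K. if f i = g k \<and> Q i then 1 else 0 :: int) = (if f i \<in> g ` K \<and> Q i then 1 else 0)" for i
  proof -
    have "(\<Sum>k\<in>K. if f i = g k \<and> Q i then 1 else 0 :: int) = (\<Sum>m\<in>g ` K. if f i = m \<and> Q i then 1 else 0)"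
      by (simp add: sum.reindex[OF assms(1)])
    also have "\<dots> = (if f i \<in> g ` K \<and> Q i then 1 else 0)"
      using assms(2) by (cases "Q i") (simp_all add: sum.delta)
    finally show ?thesis .
  qed
  then show ?thesis
    by (subst sum.swap) simp
qed

lemma odd_mem_image_iff:
  fixes m N :: nat
  assumes "m \<le> N"
  shows "m \<in> (\<lambda>k. 2 * k - 1) ` {1..N} \<longleftrightarrow> odd m"
proof
  assume "odd m"
  then have "m = 2 * ((m + 1) div 2) - 1" and "(m + 1) div 2 \<in> {1..N}"
    using assms by (auto elim!: oddE)
  then show "m \<in> (\<lambda>k. 2 * k - 1) ` {1..N}"
    by blast
qed auto

lemma even_mem_image_iff:
  fixes m N :: nat
  assumes "m \<le> N"
  shows "m \<in> (\<lambda>k. 2 * k) ` {1..N} \<longleftrightarrow> even m \<and> m \<noteq> 0"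
proof
  assume "even m \<and> m \<noteq> 0"
  then have "m = 2 * (m div 2)" and "m div 2 \<in> {1..N}"
    using assms by auto
  then show "m \<in> (\<lambda>k. 2 * k) ` {1..N}"
    by blast
qed auto

section \<open>Smooth eigencurves\<close>

lemma nbhds_in_interval:
  assumes "\<epsilon> > 0" and "T \<in> nbhds_in {t0 - \<epsilon>..t0 + \<epsilon>} t0"
  obtains d where "d > 0" and "T = {t0 - d..t0 + d}" and "T \<subseteq> {t0 - \<epsilon>..t0 + \<epsilon>}"
proof -
  obtain \<delta> where "\<delta> > 0" and T: "T = {t0 - \<epsilon>..t0 + \<epsilon>} \<inter> cball t0 \<delta>"
    using assms(2) unfolding nbhds_in_def by auto
  then have "T = {t0 - min \<delta> \<epsilon>..t0 + min \<delta> \<epsilon>}"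
    by (auto simp: cball_eq_atLeastAtMost)
  moreover have "min \<delta> \<epsilon> > 0"
    using \<open>\<delta> > 0\<close> assms(1) by simp
  ultimately show ?thesis
    using that T by blast
qed

locale smooth_eigencurve =
  fixes L :: "real \<Rightarrow> ('v::euclidean_space \<Rightarrow>\<^sub>L 'v)"
    and lam :: "nat \<Rightarrow> real \<Rightarrow> real"
    and vv :: "nat \<Rightarrow> real \<Rightarrow> 'v"
    and t0 \<epsilon> :: real
    and S :: "real set"
  assumes S_def: "S = {t0 - \<epsilon>..t0 + \<epsilon>}"
    and eps: "\<epsilon> > 0"
    and L_smooth: "smooth_on S L"
    and L_inv: "\<forall>t\<in>S. t \<noteq> t0 \<longrightarrow> bij (blinfun_apply (L t))"
    and lam_smooth: "\<forall>i<DIM('v). smooth_on S (lam i)"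
    and finite_order: "\<forall>i<DIM('v). (\<not> (\<exists>c. \<forall>t\<in>S. lam i t = c)) \<longrightarrow> (\<exists>j. hderiv S (lam i) j t0 \<noteq> 0)"
    and vv_smooth: "\<forall>i<DIM('v). smooth_on S (vv i)"
    and vv_frame: "t \<in> S \<Longrightarrow> orthonormal_frame (\<lambda>i. vv i t)"
    and vv_eig: "\<forall>t\<in>S. \<forall>i<DIM('v). blinfun_apply (L t) (vv i t) = lam i t *\<^sub>R vv i t"
begin

definition vanishing_indices :: "nat \<Rightarrow> nat set" where
  "vanishing_indices k = {i. i < DIM('v) \<and> (\<forall>j<k. hderiv S (lam i) j t0 = 0)}"

definition lam_order :: "nat \<Rightarrow> nat" where
  "lam_order i = (LEAST j. hderiv S (lam i) j t0 \<noteq> 0)"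

definition lam_lead :: "nat \<Rightarrow> real" where
  "lam_lead i = hderiv S (lam i) (lam_order i) t0"

lemma t0_in_S: "t0 \<in> S" and ends_in_S: "t0 + \<epsilon> \<in> S" "t0 - \<epsilon> \<in> S"
  using eps by (auto simp: S_def)

lemma S_in_nbhds: "S \<in> nbhds_in S t0"
  unfolding nbhds_in_def S_def using eps by (auto simp: cball_eq_atLeastAtMost intro!: exI[of _ \<epsilon>])

lemma deriv_seq_L: "deriv_seq S L (hderiv S L)"
  and deriv_seq_lam: "i < DIM('v) \<Longrightarrow> deriv_seq S (lam i) (hderiv S (lam i))"
  and deriv_seq_vv: "i < DIM('v) \<Longrightarrow> deriv_seq S (vv i) (hderiv S (vv i))"
  using L_smooth lam_smooth vv_smooth by (simp_all add: deriv_seq_hderiv)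

lemma inner_L_vv:
  assumes "t \<in> S" and "j < DIM('v)"
  shows "inner (blinfun_apply (L t) x) (vv j t) = lam j t * inner x (vv j t)"
  using orthonormal_frame.inner_eigenframe[OF vv_frame[OF assms(1)], of "L t" "\<lambda>i. lam i t"]
    vv_eig assms by blast

lemma lam_nonzero:
  assumes "t \<in> S" "t \<noteq> t0" "i < DIM('v)"
  shows "lam i t \<noteq> 0"
proof
  assume "lam i t = 0"
  then have "blinfun_apply (L t) (vv i t) = blinfun_apply (L t) 0"
    using vv_eig assms by simp
  then have "vv i t = 0"
    using L_inv assms by (metis bij_def injD)
  then show False
    using orthonormal_frame.frame_nonzero[OF vv_frame] assms by blast
qed

text \<open>A constant eigenvalue is nonzero at \<open>t0 + \<epsilon>\<close>, so it does not vanish at \<open>t0\<close> either.\<close>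

lemma lam_finite_order:
  assumes "i < DIM('v)"
  shows "\<exists>j. hderiv S (lam i) j t0 \<noteq> 0"
proof (rule ccontr)
  assume "\<not> ?thesis"
  then have "\<forall>j. hderiv S (lam i) j t0 = 0"
    by simp
  moreover obtain c where "\<forall>t\<in>S. lam i t = c"
    using finite_order assms calculation by blast
  ultimately have "lam i (t0 + \<epsilon>) = 0"
    using deriv_seq_zero[OF deriv_seq_lam[OF assms] t0_in_S] t0_in_S ends_in_S by metis
  then show False
    using lam_nonzero[OF ends_in_S(1) _ assms] eps by simp
qed

lemma lam_lead_nonzero: "i < DIM('v) \<Longrightarrow> lam_lead i \<noteq> 0"
  unfolding lam_lead_def lam_order_def by (rule LeastI_ex) (rule lam_finite_order)

lemma hderiv_lam_below_order: "j < lam_order i \<Longrightarrow> hderiv S (lam i) j t0 = 0"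
  unfolding lam_order_def using not_less_Least by blast

lemma hderiv_lam_upto_order:
  assumes "i < DIM('v)" and "k \<le> lam_order i"
  shows "hderiv S (lam i) k t0 = (if k = lam_order i then lam_lead i else 0)"
  using assms hderiv_lam_below_order by (auto simp: lam_lead_def)

lemma mem_vanishing_indices: "i \<in> vanishing_indices k \<longleftrightarrow> i < DIM('v) \<and> k \<le> lam_order i"
proof -
  have "(\<forall>j<k. hderiv S (lam i) j t0 = 0) \<longleftrightarrow> k \<le> lam_order i" if "i < DIM('v)"
    using hderiv_lam_below_order lam_lead_nonzero[OF that] unfolding lam_lead_def
    by (metis leI order_less_le_trans)
  then show ?thesis
    unfolding vanishing_indices_def by blast
qed

lemma vanishing_indices_subset: "vanishing_indices k \<subseteq> {..<DIM('v)}"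
  by (auto simp: vanishing_indices_def)

text \<open>Differentiate \<open>\<langle>L(t) u(t), v\<^sub>i(t)\<rangle> = \<lambda>\<^sub>i(t) \<langle>u(t), v\<^sub>i(t)\<rangle>\<close> \<open>p\<close> times at \<open>t0\<close>: by the
  Leibniz rule only the top-order terms survive on both sides.\<close>

lemma inner_root_fun_deriv_vv:
  assumes root: "is_root_fun L S t0 T u" and ord: "root_ord_ge L t0 T u p"
    and "i < DIM('v)" and lam_vanish: "\<forall>j<p. hderiv S (lam i) j t0 = 0"
  shows "inner (hderiv T (\<lambda>t. blinfun_apply (L t) (u t)) p t0) (vv i t0)
       = hderiv S (lam i) p t0 * inner (u t0) (vv i t0)"
proof -
  obtain d where "d > 0" and T: "T = {t0 - d..t0 + d}" and "T \<subseteq> S"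
    using root eps unfolding is_root_fun_def S_def by (auto elim: nbhds_in_interval)
  then have "t0 \<in> T"
    by simp
  obtain Du where Du: "deriv_seq T u Du"
    using root unfolding is_root_fun_def smooth_on_def by blast
  note restrict = deriv_seq_subset[OF _ \<open>T \<subseteq> S\<close>]
  define DF where "DF = leibniz_seq blinfun_apply (hderiv S L) Du"
  have DF: "deriv_seq T (\<lambda>t. blinfun_apply (L t) (u t)) DF"
    unfolding DF_def by (rule deriv_seq_bilinear[OF bounded_bilinear_blinfun_apply restrict[OF deriv_seq_L] Du])
  have hderiv_F: "hderiv T (\<lambda>t. blinfun_apply (L t) (u t)) j t0 = DF j t0" for j
    unfolding T by (rule hderiv_eq_deriv_seq) (use \<open>d > 0\<close> DF \<open>t0 \<in> T\<close> T in auto)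
  have DF_vanish: "\<forall>j<p. DF j t0 = 0"
    using ord hderiv_F unfolding root_ord_ge_def by simp
  define DA where "DA = leibniz_seq inner Du (hderiv S (vv i))"
  have DA: "deriv_seq T (\<lambda>t. inner (u t) (vv i t)) DA"
    unfolding DA_def by (rule deriv_seq_bilinear[OF bounded_bilinear_inner Du restrict[OF deriv_seq_vv[OF \<open>i < _\<close>]]])
  define DG where "DG = leibniz_seq inner DF (hderiv S (vv i))"
  have DG: "deriv_seq T (\<lambda>t. inner (blinfun_apply (L t) (u t)) (vv i t)) DG"
    unfolding DG_def by (rule deriv_seq_bilinear[OF bounded_bilinear_inner DF restrict[OF deriv_seq_vv[OF \<open>i < _\<close>]]])
  define DH where "DH = leibniz_seq (*) (hderiv S (lam i)) DA"
  have DH: "deriv_seq T (\<lambda>t. inner (blinfun_apply (L t) (u t)) (vv i t)) DH"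
  proof (rule deriv_seq_cong)
    show "deriv_seq T (\<lambda>t. lam i t * inner (u t) (vv i t)) DH"
      unfolding DH_def by (rule deriv_seq_bilinear[OF bounded_bilinear_mult restrict[OF deriv_seq_lam[OF \<open>i < _\<close>]] DA])
  qed (use inner_L_vv \<open>T \<subseteq> S\<close> \<open>i < _\<close> in auto)
  have "DG p t0 = DH p t0"
    using deriv_seq_unique[OF _ DG[unfolded T] DH[unfolded T]] \<open>d > 0\<close> \<open>t0 \<in> T\<close> T by auto
  moreover have "DG p t0 = inner (DF p t0) (vv i t0)"
    unfolding DG_def using leibniz_seq_vanishing[where D = DF, OF bounded_bilinear_inner DF_vanish]
      deriv_seq_zero[OF deriv_seq_vv[OF \<open>i < _\<close>] t0_in_S] by simp
  moreover have "DH p t0 = hderiv S (lam i) p t0 * inner (u t0) (vv i t0)"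
    unfolding DH_def using leibniz_seq_vanishing[where D = "hderiv S (lam i)", OF bounded_bilinear_mult lam_vanish]
      deriv_seq_zero[OF DA \<open>t0 \<in> T\<close>] by simp
  ultimately show ?thesis
    using hderiv_F by simp
qed

lemma W_space_subset: "W_space L S t0 k \<subseteq> span ((\<lambda>i. vv i t0) ` vanishing_indices k)"
proof
  fix x assume "x \<in> W_space L S t0 k"
  then obtain u T where root: "is_root_fun L S t0 T u" and ord: "root_ord_ge L t0 T u k" and x: "x = u t0"
    unfolding W_space_def by auto
  have "inner x (vv j t0) = 0" if "j < DIM('v)" "j \<notin> vanishing_indices k" for j
  proof -
    have "lam_order j < k"
      using that by (simp add: mem_vanishing_indices)
    then have ord_j: "root_ord_ge L t0 T u (lam_order j)"
      and "hderiv T (\<lambda>t. blinfun_apply (L t) (u t)) (lam_order j) t0 = 0"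
      using ord unfolding root_ord_ge_def by auto
    moreover have "\<forall>j'<lam_order j. hderiv S (lam j) j' t0 = 0"
      using hderiv_lam_below_order by blast
    ultimately have "lam_lead j * inner x (vv j t0) = 0"
      using inner_root_fun_deriv_vv[OF root ord_j \<open>j < _\<close>] x unfolding lam_lead_def by simp
    then show ?thesis
      using lam_lead_nonzero[OF \<open>j < _\<close>] by simp
  qed
  then show "x \<in> span ((\<lambda>i. vv i t0) ` vanishing_indices k)"
    using orthonormal_frame.in_span_frame_iff[OF vv_frame[OF t0_in_S] vanishing_indices_subset] by blast
qed

text \<open>Conversely, \<open>\<Sum>\<^sub>i c\<^sub>i v\<^sub>i(t)\<close> over the indices in \<open>vanishing_indices k\<close> is a root function
  of order at least \<open>k\<close>.\<close>

lemma span_subset_W_space: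
  assumes "k \<ge> 1"
  shows "span ((\<lambda>i. vv i t0) ` vanishing_indices k) \<subseteq> W_space L S t0 k"
proof
  fix x assume x: "x \<in> span ((\<lambda>i. vv i t0) ` vanishing_indices k)"
  define I where "I = vanishing_indices k"
  define u where "u t = (\<Sum>i\<in>I. inner x (vv i t0) *\<^sub>R vv i t)" for t
  have I: "i < DIM('v)" "\<forall>j<k. hderiv S (lam i) j t0 = 0" if "i \<in> I" for i
    using that unfolding I_def vanishing_indices_def by auto
  have x_eq: "x = u t0"
    unfolding u_def I_def
    by (rule orthonormal_frame.frame_expansion_span[OF vv_frame[OF t0_in_S] vanishing_indices_subset x])
  have "smooth_on S u"
    unfolding smooth_on_def u_def
    by (rule exI, rule deriv_seq_sum, rule deriv_seq_scaleR_const, rule deriv_seq_vv) (use I in auto)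
  define DF where "DF n t = (\<Sum>i\<in>I. inner x (vv i t0) *\<^sub>R leibniz_seq scaleR (hderiv S (lam i)) (hderiv S (vv i)) n t)"
    for n t
  have DF: "deriv_seq S (\<lambda>t. blinfun_apply (L t) (u t)) DF"
  proof (rule deriv_seq_cong)
    show "deriv_seq S (\<lambda>t. \<Sum>i\<in>I. inner x (vv i t0) *\<^sub>R (lam i t *\<^sub>R vv i t)) DF"
      unfolding DF_def
      by (rule deriv_seq_sum, rule deriv_seq_scaleR_const, rule deriv_seq_bilinear[OF bounded_bilinear_scaleR])
         (use I in \<open>auto intro: deriv_seq_lam deriv_seq_vv\<close>)
  qed (use vv_eig I in \<open>simp add: u_def blinfun.sum_right blinfun.scaleR_right\<close>)
  have hderiv_F: "hderiv S (\<lambda>t. blinfun_apply (L t) (u t)) j t0 = DF j t0" for j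
    using eps DF t0_in_S unfolding S_def by (intro hderiv_eq_deriv_seq) auto
  have F_vanish: "hderiv S (\<lambda>t. blinfun_apply (L t) (u t)) j t0 = 0" if "j < k" for j
    unfolding hderiv_F DF_def using I that
    by (intro sum.neutral ballI) (simp add: leibniz_seq_vanishing[OF bounded_bilinear_scaleR])
  have "blinfun_apply (L t0) (u t0) = 0"
    using F_vanish[of 0] \<open>k \<ge> 1\<close> deriv_seq_zero[OF DF t0_in_S] by (simp add: hderiv_F)
  then have "is_root_fun L S t0 S u" and "root_ord_ge L t0 S u k"
    using S_in_nbhds \<open>smooth_on S u\<close> F_vanish unfolding is_root_fun_def root_ord_ge_def by auto
  then show "x \<in> W_space L S t0 k"
    unfolding W_space_def x_eq by blast
qed

lemma W_space_eq: "k \<ge> 1 \<Longrightarrow> W_space L S t0 k = span ((\<lambda>i. vv i t0) ` vanishing_indices k)"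
  using W_space_subset span_subset_W_space by blast

abbreviation partial_diag :: "nat \<Rightarrow> 'v \<Rightarrow> 'v \<Rightarrow> real" where
  "partial_diag k \<equiv> diag_form (\<lambda>i. vv i t0) (\<lambda>i. hderiv S (lam i) k t0 / fact k) (vanishing_indices k)"

lemma B_form_eq_partial_diag:
  assumes "x \<in> W_space L S t0 k" and w: "w \<in> W_space L S t0 k"
  shows "B_form L S t0 k x w = partial_diag k x w"
proof -
  define P where "P r \<longleftrightarrow> (\<exists>u T. is_root_fun L S t0 T u \<and> root_ord_ge L t0 T u k \<and> u t0 = x \<and>
      r = inner (hderiv T (\<lambda>t. blinfun_apply (L t) (u t)) k t0) w / fact k)" for r
  have "r = partial_diag k x w" if "P r" for r
  proof -
    obtain u T where root: "is_root_fun L S t0 T u" and ord: "root_ord_ge L t0 T u k" and "u t0 = x"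
      and r: "r = inner (hderiv T (\<lambda>t. blinfun_apply (L t) (u t)) k t0) w / fact k"
      using \<open>P r\<close> unfolding P_def by blast
    define F where "F = hderiv T (\<lambda>t. blinfun_apply (L t) (u t)) k t0"
    have "w = (\<Sum>i\<in>vanishing_indices k. inner w (vv i t0) *\<^sub>R vv i t0)"
      using orthonormal_frame.frame_expansion_span[OF vv_frame[OF t0_in_S] vanishing_indices_subset]
        W_space_subset w by blast
    then have "inner F w = (\<Sum>i\<in>vanishing_indices k. inner w (vv i t0) * inner F (vv i t0))"
      by (metis (no_types, lifting) inner_scaleR_right inner_sum_right sum.cong)
    also have "\<dots> = (\<Sum>i\<in>vanishing_indices k. inner w (vv i t0) * (hderiv S (lam i) k t0 * inner x (vv i t0)))"
      using inner_root_fun_deriv_vv[OF root ord] \<open>u t0 = x\<close>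
      by (intro sum.cong) (auto simp: F_def vanishing_indices_def)
    finally have Fw: "inner F w
        = (\<Sum>i\<in>vanishing_indices k. inner w (vv i t0) * (hderiv S (lam i) k t0 * inner x (vv i t0)))" .
    show ?thesis
      unfolding r F_def[symmetric] Fw diag_form_def sum_divide_distrib
      by (intro sum.cong) (simp_all add: inner_commute mult_ac)
  qed
  moreover obtain u T where "is_root_fun L S t0 T u" "root_ord_ge L t0 T u k" "u t0 = x"
    using \<open>x \<in> W_space L S t0 k\<close> unfolding W_space_def by auto
  then have "\<exists>r. P r"
    unfolding P_def by blast
  then have "P (SOME r. P r)"
    by (rule someI_ex)
  ultimately show ?thesis
    unfolding B_form_def P_def[symmetric] by blast
qed

lemma B_form_vv:
  assumes "k \<ge> 1" and "i \<in> vanishing_indices k" and "w \<in> W_space L S t0 k"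
  shows "B_form L S t0 k (c *\<^sub>R vv i t0) w = hderiv S (lam i) k t0 / fact k * inner (c *\<^sub>R vv i t0) w"
proof -
  have "c *\<^sub>R vv i t0 \<in> W_space L S t0 k"
    unfolding W_space_eq[OF \<open>k \<ge> 1\<close>] using assms(2) by (intro span_scale span_base) auto
  then show ?thesis
    using B_form_eq_partial_diag assms(3)
      orthonormal_frame.diag_form_frame_left[OF vv_frame[OF t0_in_S] vanishing_indices_subset assms(2)]
    by simp
qed

lemma partial_coindex_index:
  assumes "k \<ge> 1"
  shows "partial_coindex L S t0 k = card {i. i < DIM('v) \<and> lam_order i = k \<and> lam_lead i > 0}"
    and "partial_index L S t0 k = card {i. i < DIM('v) \<and> lam_order i = k \<and> lam_lead i < 0}"
proof -
  have counts: "coindex_form (B_form L S t0 k) (W_space L S t0 k)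
        = card {i\<in>vanishing_indices k. hderiv S (lam i) k t0 / fact k > 0}
      \<and> index_form (B_form L S t0 k) (W_space L S t0 k)
        = card {i\<in>vanishing_indices k. hderiv S (lam i) k t0 / fact k < 0}"
    unfolding W_space_eq[OF assms]
    by (rule orthonormal_frame.coindex_index_diag_form[OF vv_frame[OF t0_in_S] vanishing_indices_subset])
       (use B_form_eq_partial_diag W_space_eq[OF assms] in auto)
  have "hderiv S (lam i) k t0 = (if k = lam_order i then lam_lead i else 0)" if "i \<in> vanishing_indices k" for i
    using that hderiv_lam_upto_order by (simp add: mem_vanishing_indices)
  then have "{i\<in>vanishing_indices k. hderiv S (lam i) k t0 / fact k > 0}
        = {i. i < DIM('v) \<and> lam_order i = k \<and> lam_lead i > 0}"
      and "{i\<in>vanishing_indices k. hderiv S (lam i) k t0 / fact k < 0}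
        = {i. i < DIM('v) \<and> lam_order i = k \<and> lam_lead i < 0}"
    by (auto simp: mem_vanishing_indices zero_less_divide_iff divide_less_0_iff split: if_splits)
  then show "partial_coindex L S t0 k = card {i. i < DIM('v) \<and> lam_order i = k \<and> lam_lead i > 0}"
    and "partial_index L S t0 k = card {i. i < DIM('v) \<and> lam_order i = k \<and> lam_lead i < 0}"
    using counts unfolding partial_coindex_def partial_index_def by simp_all
qed

lemma lam_at_t0: "i < DIM('v) \<Longrightarrow> lam i t0 = (if lam_order i = 0 then lam_lead i else 0)"
  using deriv_seq_zero[OF deriv_seq_lam t0_in_S] hderiv_lam_upto_order[of i 0] by simp

lemma lam_sign_right: "i < DIM('v) \<Longrightarrow> lam i (t0 + \<epsilon>) > 0 \<longleftrightarrow> lam_lead i > 0"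
  and lam_sign_left: "i < DIM('v) \<Longrightarrow>
    lam i (t0 - \<epsilon>) > 0 \<longleftrightarrow> (even (lam_order i) \<and> lam_lead i > 0) \<or> (odd (lam_order i) \<and> lam_lead i < 0)"
proof -
  assume i: "i < DIM('v)"
  have "deriv_seq {t0 - \<epsilon>..t0 + \<epsilon>} (lam i) (hderiv S (lam i))"
    using deriv_seq_lam[OF i] by (simp add: S_def)
  moreover have "\<forall>j<lam_order i. hderiv S (lam i) j t0 = 0"
    using hderiv_lam_below_order by blast
  moreover have "\<forall>t\<in>{t0 - \<epsilon>..t0 + \<epsilon>}. t \<noteq> t0 \<longrightarrow> lam i t \<noteq> 0"
    using lam_nonzero[OF _ _ i] by (simp add: S_def)
  ultimately have right: "lam i (t0 + \<epsilon>) * lam_lead i > 0"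
    and left: "(-1)^lam_order i * lam i (t0 - \<epsilon>) * lam_lead i > 0"
    using sign_at_ends_of_order[OF eps] lam_lead_nonzero[OF i] unfolding lam_lead_def by blast+
  from right show "lam i (t0 + \<epsilon>) > 0 \<longleftrightarrow> lam_lead i > 0"
    by (auto simp: zero_less_mult_iff)
  from left show
    "lam i (t0 - \<epsilon>) > 0 \<longleftrightarrow> (even (lam_order i) \<and> lam_lead i > 0) \<or> (odd (lam_order i) \<and> lam_lead i < 0)"
    by (cases "even (lam_order i)") (auto simp: zero_less_mult_iff mult_less_0_iff)
qed

lemma coindex_op_L: "t \<in> S \<Longrightarrow> coindex_op (L t) = card {i. i < DIM('v) \<and> lam i t > 0}"
  using orthonormal_frame.coindex_op_eigenframe[OF vv_frame, of t "L t" "\<lambda>i. lam i t"] vv_eig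
  by blast

lemma nullity_op_L: "t \<in> S \<Longrightarrow> nullity_op (L t) = card {i. i < DIM('v) \<and> lam i t = 0}"
  using orthonormal_frame.nullity_op_eigenframe[OF vv_frame, of t "L t" "\<lambda>i. lam i t"] vv_eig
  by blast

definition max_order :: nat where
  "max_order = Max (lam_order ` {..<DIM('v)})"

lemma lam_order_le_max: "i < DIM('v) \<Longrightarrow> lam_order i \<le> max_order"
  unfolding max_order_def by (rule Max_ge) auto

lemma partial_counts_beyond_max_order:
  assumes "k > max_order"
  shows "partial_coindex L S t0 k = 0 \<and> partial_index L S t0 k = 0"
  using partial_coindex_index[of k] assms lam_order_le_max by fastforce

lemma sum_partial_counts:
  fixes g :: "nat \<Rightarrow> nat"
  assumes "inj_on g {1..max_order}" and "\<And>k. k \<ge> 1 \<Longrightarrow> g k \<ge> 1"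
    and R: "\<And>i. i < DIM('v) \<Longrightarrow> lam_order i \<in> g ` {1..max_order} \<longleftrightarrow> R (lam_order i)"
  shows "(\<Sum>k=1..max_order. int (partial_coindex L S t0 (g k)))
       = (\<Sum>i<DIM('v). if R (lam_order i) \<and> lam_lead i > 0 then 1 else 0)"
    and "(\<Sum>k=1..max_order. int (partial_index L S t0 (g k)))
       = (\<Sum>i<DIM('v). if R (lam_order i) \<and> lam_lead i < 0 then 1 else 0)"
proof -
  have "(\<Sum>k=1..max_order. int (partial_coindex L S t0 (g k)))
      = (\<Sum>k=1..max_order. \<Sum>i<DIM('v). if lam_order i = g k \<and> lam_lead i > 0 then 1 else 0)"
   and "(\<Sum>k=1..max_order. int (partial_index L S t0 (g k)))
      = (\<Sum>k=1..max_order. \<Sum>i<DIM('v). if lam_order i = g k \<and> lam_lead i < 0 then 1 else 0)"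
    using assms(2) by (auto simp: partial_coindex_index int_card_eq_sum_indicator intro!: sum.cong)
  moreover have "(\<Sum>k=1..max_order. \<Sum>i<DIM('v). if lam_order i = g k \<and> P (lam_lead i) then 1 else 0 :: int)
      = (\<Sum>i<DIM('v). if R (lam_order i) \<and> P (lam_lead i) then 1 else 0)" for P
  proof -
    have "(\<Sum>k=1..max_order. \<Sum>i<DIM('v). if lam_order i = g k \<and> P (lam_lead i) then 1 else 0 :: int)
        = (\<Sum>i<DIM('v). if lam_order i \<in> g ` {1..max_order} \<and> P (lam_lead i) then 1 else 0)"
      by (rule sum_indicator_fibres[OF assms(1)]) simp
    also have "\<dots> = (\<Sum>i<DIM('v). if R (lam_order i) \<and> P (lam_lead i) then 1 else 0)"
      using R by (intro sum.cong) auto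
    finally show ?thesis .
  qed
  ultimately show "(\<Sum>k=1..max_order. int (partial_coindex L S t0 (g k)))
       = (\<Sum>i<DIM('v). if R (lam_order i) \<and> lam_lead i > 0 then 1 else 0)"
    and "(\<Sum>k=1..max_order. int (partial_index L S t0 (g k)))
       = (\<Sum>i<DIM('v). if R (lam_order i) \<and> lam_lead i < 0 then 1 else 0)"
    by simp_all
qed

lemma sum_partial_coindex:
  "(\<Sum>k=1..max_order. int (partial_coindex L S t0 k))
     = (\<Sum>i<DIM('v). if lam_order i \<noteq> 0 \<and> lam_lead i > 0 then 1 else 0)"
proof -
  have "lam_order i \<in> id ` {1..max_order} \<longleftrightarrow> lam_order i \<noteq> 0" if "i < DIM('v)" for i
    using lam_order_le_max[OF that] by auto
  then show ?thesis
    using sum_partial_counts(1)[of id "\<lambda>m. m \<noteq> 0"] by simp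
qed

lemma sum_partial_counts_odd:
  "(\<Sum>k=1..max_order. int (partial_coindex L S t0 (2 * k - 1)))
     = (\<Sum>i<DIM('v). if odd (lam_order i) \<and> lam_lead i > 0 then 1 else 0)"
  "(\<Sum>k=1..max_order. int (partial_index L S t0 (2 * k - 1)))
     = (\<Sum>i<DIM('v). if odd (lam_order i) \<and> lam_lead i < 0 then 1 else 0)"
proof -
  have "inj_on (\<lambda>k::nat. 2 * k - 1) {1..max_order}"
    by (auto simp: inj_on_def)
  moreover have "lam_order i \<in> (\<lambda>k. 2 * k - 1) ` {1..max_order} \<longleftrightarrow> odd (lam_order i)" if "i < DIM('v)" for i
    using odd_mem_image_iff lam_order_le_max[OF that] by blast
  ultimately show "(\<Sum>k=1..max_order. int (partial_coindex L S t0 (2 * k - 1)))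
      = (\<Sum>i<DIM('v). if odd (lam_order i) \<and> lam_lead i > 0 then 1 else 0)"
    and "(\<Sum>k=1..max_order. int (partial_index L S t0 (2 * k - 1)))
      = (\<Sum>i<DIM('v). if odd (lam_order i) \<and> lam_lead i < 0 then 1 else 0)"
    using sum_partial_counts[of "\<lambda>k. 2 * k - 1" odd] by simp_all
qed

lemma sum_partial_coindex_even:
  "(\<Sum>k=1..max_order. int (partial_coindex L S t0 (2 * k)))
     = (\<Sum>i<DIM('v). if even (lam_order i) \<and> lam_order i \<noteq> 0 \<and> lam_lead i > 0 then 1 else 0)"
proof -
  have "inj_on (\<lambda>k::nat. 2 * k) {1..max_order}"
    by (auto simp: inj_on_def)
  moreover have "lam_order i \<in> (\<lambda>k. 2 * k) ` {1..max_order} \<longleftrightarrow> even (lam_order i) \<and> lam_order i \<noteq> 0"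
    if "i < DIM('v)" for i
    using even_mem_image_iff lam_order_le_max[OF that] by blast
  ultimately show ?thesis
    using sum_partial_counts(1)[of "\<lambda>k. 2 * k" "\<lambda>m. even m \<and> m \<noteq> 0"] by simp
qed

lemma int_coindex_right: "int (coindex_op (L (t0 + \<epsilon>))) = (\<Sum>i<DIM('v). if lam_lead i > 0 then 1 else 0)"
  unfolding coindex_op_L[OF ends_in_S(1)] int_card_eq_sum_indicator by (simp add: lam_sign_right)

lemma int_coindex_left:
  "int (coindex_op (L (t0 - \<epsilon>))) = (\<Sum>i<DIM('v).
     if (even (lam_order i) \<and> lam_lead i > 0) \<or> (odd (lam_order i) \<and> lam_lead i < 0) then 1 else 0)"
  unfolding coindex_op_L[OF ends_in_S(2)] int_card_eq_sum_indicator by (simp add: lam_sign_left)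

lemma int_coindex_t0:
  "int (coindex_op (L t0)) = (\<Sum>i<DIM('v). if lam_order i = 0 \<and> lam_lead i > 0 then 1 else 0)"
  unfolding coindex_op_L[OF t0_in_S] int_card_eq_sum_indicator
  by (intro sum.cong) (auto simp: lam_at_t0)

lemma nullity_off_t0: "t \<in> S \<Longrightarrow> t \<noteq> t0 \<Longrightarrow> nullity_op (L t) = 0"
  unfolding nullity_op_L by (simp add: lam_nonzero)

lemma coindex_jump_right:
  "int (coindex_op (L (t0 + \<epsilon>))) - int (coindex_op (L t0))
     = (\<Sum>k=1..max_order. int (partial_coindex L S t0 k))"
  unfolding int_coindex_right int_coindex_t0 sum_partial_coindex sum_subtractf[symmetric]
  by (intro sum.cong) auto

lemma coindex_jump_left:
  "int (coindex_op (L t0)) - int (coindex_op (L (t0 - \<epsilon>)))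
     = - (\<Sum>k=1..max_order. int (partial_index L S t0 (2*k - 1)) + int (partial_coindex L S t0 (2*k)))"
proof -
  have rhs: "(\<Sum>k=1..max_order. int (partial_index L S t0 (2*k - 1)) + int (partial_coindex L S t0 (2*k)))
      = (\<Sum>i<DIM('v). (if odd (lam_order i) \<and> lam_lead i < 0 then 1 else 0)
          + (if even (lam_order i) \<and> lam_order i \<noteq> 0 \<and> lam_lead i > 0 then 1 else 0))"
    unfolding sum.distrib sum_partial_counts_odd(2) sum_partial_coindex_even ..
  show ?thesis
    unfolding rhs int_coindex_t0 int_coindex_left sum_subtractf[symmetric] sum_negf[symmetric]
    using lam_lead_nonzero by (intro sum.cong) auto
qed

lemma coindex_jump_across:
  "int (coindex_op (L (t0 + \<epsilon>))) - int (coindex_op (L (t0 - \<epsilon>)))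
     = (\<Sum>k=1..max_order. partial_signature L S t0 (2*k - 1))"
proof -
  have rhs: "(\<Sum>k=1..max_order. partial_signature L S t0 (2*k - 1))
      = (\<Sum>i<DIM('v). (if odd (lam_order i) \<and> lam_lead i > 0 then 1 else 0)
          - (if odd (lam_order i) \<and> lam_lead i < 0 then 1 else 0))"
    unfolding partial_signature_def signature_form_def sum_subtractf
      sum_partial_counts_odd[unfolded partial_coindex_def partial_index_def] ..
  show ?thesis
    unfolding rhs int_coindex_right int_coindex_left sum_subtractf[symmetric]
    using lam_lead_nonzero by (intro sum.cong) auto
qed

end

theorem proposition2p9:
  fixes L :: "real \<Rightarrow> ('v::euclidean_space \<Rightarrow>\<^sub>L 'v)"
    and lam :: "nat \<Rightarrow> real \<Rightarrow> real"
    and vv :: "nat \<Rightarrow> real \<Rightarrow> 'v"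
    and t0 \<epsilon> :: real
  defines "S \<equiv> {t0 - \<epsilon> .. t0 + \<epsilon>}"
  assumes eps: "\<epsilon> > 0"
    and L_smooth: "smooth_on S L"
    and L_sym: "\<forall>t\<in>S. \<forall>x y. inner (blinfun_apply (L t) x) y = inner x (blinfun_apply (L t) y)"
    and L_inv: "\<forall>t\<in>S. t \<noteq> t0 \<longrightarrow> bij (blinfun_apply (L t))"
    and L_sing: "\<not> bij (blinfun_apply (L t0))"
    and lam_smooth: "\<forall>i<DIM('v). smooth_on S (lam i)"
    and finite_order: "\<forall>i<DIM('v). (\<not> (\<exists>c. \<forall>t\<in>S. lam i t = c)) \<longrightarrow> (\<exists>j. hderiv S (lam i) j t0 \<noteq> 0)"
    and vv_smooth: "\<forall>i<DIM('v). smooth_on S (vv i)"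
    and vv_orth: "\<forall>t\<in>S. \<forall>i<DIM('v). \<forall>j<DIM('v). inner (vv i t) (vv j t) = (if i = j then 1 else 0)"
    and vv_eig: "\<forall>t\<in>S. \<forall>i<DIM('v). blinfun_apply (L t) (vv i t) = lam i t *\<^sub>R vv i t"
  shows
    "(\<forall>k\<ge>1. W_space L S t0 k = span {vv i t0 | i. i < DIM('v) \<and> (\<forall>j<k. hderiv S (lam i) j t0 = 0)})
   \<and> (\<forall>k\<ge>1. \<forall>i<DIM('v). (\<forall>j<k. hderiv S (lam i) j t0 = 0) \<longrightarrow>
        (\<forall>c w. w \<in> W_space L S t0 k \<longrightarrow>
           B_form L S t0 k (c *\<^sub>R vv i t0) w = hderiv S (lam i) k t0 / fact k * inner (c *\<^sub>R vv i t0) w))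
   \<and> (\<exists>N. (\<forall>k>N. partial_coindex L S t0 k = 0 \<and> partial_index L S t0 k = 0)
      \<and> int (coindex_op (L (t0 + \<epsilon>))) - int (coindex_op (L t0))
          = (\<Sum>k=1..N. int (partial_coindex L S t0 k))
      \<and> int (coindex_op (L t0)) - int (coindex_op (L (t0 - \<epsilon>)))
          = - (\<Sum>k=1..N. int (partial_index L S t0 (2*k - 1)) + int (partial_coindex L S t0 (2*k)))
      \<and> int (coindex_op (L (t0 + \<epsilon>))) - int (coindex_op (L (t0 - \<epsilon>)))
          = (\<Sum>k=1..N. partial_signature L S t0 (2*k - 1))
      \<and> int (ext_coindex_op (L (t0 + \<epsilon>))) - int (ext_coindex_op (L t0))
          = (\<Sum>k=1..N. int (partial_coindex L S t0 k)) - int (dim {x. blinfun_apply (L t0) x = 0})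
      \<and> int (ext_coindex_op (L t0)) - int (ext_coindex_op (L (t0 - \<epsilon>)))
          = - (\<Sum>k=1..N. int (partial_index L S t0 (2*k - 1)) + int (partial_coindex L S t0 (2*k)))
            + int (dim {x. blinfun_apply (L t0) x = 0}))"
proof -
  interpret smooth_eigencurve L lam vv t0 \<epsilon> S
    by unfold_locales (use assms in \<open>auto simp: orthonormal_frame_def\<close>)
  have eigvecs: "{vv i t0 | i. i < DIM('v) \<and> (\<forall>j<k. hderiv S (lam i) j t0 = 0)}
      = (\<lambda>i. vv i t0) ` vanishing_indices k" for k
    by (auto simp: vanishing_indices_def)
  have no_kernel: "dim {x. blinfun_apply (L (t0 + \<epsilon>)) x = 0} = 0" "dim {x. blinfun_apply (L (t0 - \<epsilon>)) x = 0} = 0"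
    using nullity_off_t0 ends_in_S eps unfolding nullity_op_def by auto
  have "\<forall>k\<ge>1. W_space L S t0 k = span {vv i t0 | i. i < DIM('v) \<and> (\<forall>j<k. hderiv S (lam i) j t0 = 0)}"
    by (simp add: eigvecs W_space_eq)
  moreover have "\<forall>k\<ge>1. \<forall>i<DIM('v). (\<forall>j<k. hderiv S (lam i) j t0 = 0) \<longrightarrow>
        (\<forall>c w. w \<in> W_space L S t0 k \<longrightarrow>
           B_form L S t0 k (c *\<^sub>R vv i t0) w = hderiv S (lam i) k t0 / fact k * inner (c *\<^sub>R vv i t0) w)"
    by (simp add: B_form_vv vanishing_indices_def)
  ultimately show ?thesis
    using partial_counts_beyond_max_order coindex_jump_right coindex_jump_left coindex_jump_across
    unfolding ext_coindex_op_def nullity_op_def no_kernel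
    by (intro conjI exI[of _ max_order]) auto
qed

end
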